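(* Consider the continuous Bomber Problem described in the context, with parameter $v\in(0,1]$. Let $x=x_t>0$ be defined for small $t>0$ with $|\log t|/x_t\to\rho\in(0,\infty)$ as $t\to 0$. If there is $\gamma\in(0,1]$ such that $H(x_t,t)\ge 1-e^{-\gamma x_t+o(x_t)}$ as $t\to 0$, then $K(x_t,t)\ge \gamma x_t+o(x_t)$ as $t\to 0$.
   Context: The Bomber Problem: a bomber holding an amount $x\ge 0$ of (continuously divisible) ammunition must survive for a remaining time $t\ge 0$. Enemies arrive according to a time-homogeneous Poisson process of rate 1. Upon meeting an enemy, the bomber chooses an amount $y\in[0,x]$ of its current ammunition to fire; the enemy survives this with probability $e^{-y}$, and if it survives it destroys the bomber with probability $v\in(0,1]$. Thus the bomber survives an encounter in which it spends $y$ with probability $a(y)=1-ve^{-y}$, and continues with ammunition $x-y$. $P(x,t)$ denotes the optimal probability that the bomber survives for time $t$ starting with ammunition $x$; $H(x,t)$ denotes the optimal conditional probability of survival given that an enemy is encountered at remaining time $t$ while holding ammunition $x$; and $K(x,t)\in[0,x]$ denotes the optimal amount of ammunition to fire at that enemy, so that $H(x,t)=a(K(x,t))P(x-K(x,t),t)$. The notation $o(x_t)$ refers to a quantity $r_t$ with $r_t/x_t\to 0$ as $t\to 0$. *)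

theory Defs
  imports "HOL-Analysis.Analysis" "HOL-Library.Landau_Symbols"
begin

text \<open>Survival probability of an encounter in which the bomber spends y.\<close>
definition bomber_a :: "real \<Rightarrow> real \<Rightarrow> real" where
  "bomber_a v y = 1 - v * exp (- y)"

definition bomber_H :: "real \<Rightarrow> (real \<Rightarrow> real \<Rightarrow> real) \<Rightarrow> real \<Rightarrow> real \<Rightarrow> real" where
  "bomber_H v P x t = (SUP y\<in>{0..x}. bomber_a v y * P (x - y) t)"

text \<open>P is the optimal survival probability: the (unique) [0,1]-valued solution of the
  dynamic programming equation obtained by conditioning on the first encounter
  (Poisson rate 1):  P(x,t) = e^{-t} + int_0^t e^{-(t-s)} H(x,s) ds.\<close>
definition is_bomber_P :: "real \<Rightarrow> (real \<Rightarrow> real \<Rightarrow> real) \<Rightarrow> bool" where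
  "is_bomber_P v P \<longleftrightarrow>
     (\<forall>x\<ge>0. \<forall>t\<ge>0. 0 \<le> P x t \<and> P x t \<le> 1) \<and>
     (\<forall>x\<ge>0. \<forall>t\<ge>0.
        ((\<lambda>s. exp (- (t - s)) * bomber_H v P x s) integrable_on {0..t}) \<and>
        P x t = exp (- t) + integral {0..t} (\<lambda>s. exp (- (t - s)) * bomber_H v P x s))"

definition is_bomber_K :: "real \<Rightarrow> (real \<Rightarrow> real \<Rightarrow> real) \<Rightarrow> (real \<Rightarrow> real \<Rightarrow> real) \<Rightarrow> bool" where
  "is_bomber_K v P K \<longleftrightarrow>
     (\<forall>x\<ge>0. \<forall>t\<ge>0. 0 \<le> K x t \<and> K x t \<le> x \<and>
        bomber_H v P x t = bomber_a v (K x t) * P (x - K x t) t)"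

end

theory Submission
  imports Defs "HOL-Real_Asymp.Real_Asymp"
begin

text \<open>Since survival probabilities are at most 1, the optimal encounter value is bounded by
  the survival probability of the encounter itself, H(x,t) \<le> a(K(x,t)); a lower bound
  1 - e^{-s} on H therefore forces v e^{-K} \<le> e^{-s}, i.e. K \<ge> s + log v.  The constant
  log v is o(x_t) because x_t grows like |log t|.\<close>

lemma bomber_H_le_bomber_a_K:
  assumes "v \<le> 1" "is_bomber_P v P" "is_bomber_K v P K" "0 \<le> x" "0 \<le> t"
  shows "bomber_H v P x t \<le> bomber_a v (K x t)"
proof -
  have K: "0 \<le> K x t" "K x t \<le> x" "bomber_H v P x t = bomber_a v (K x t) * P (x - K x t) t"
    using assms(3-5) unfolding is_bomber_K_def by auto
  have "P (x - K x t) t \<le> 1"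
    using assms(2,5) K(2) unfolding is_bomber_P_def by auto
  moreover have "0 \<le> bomber_a v (K x t)"
  proof (cases "v \<le> 0")
    case False
    then have "v * exp (- K x t) \<le> 1 * 1"
      using assms(1) K(1) by (intro mult_mono) auto
    then show ?thesis by (simp add: bomber_a_def)
  qed (use mult_nonpos_nonneg[of v "exp (- K x t)"] in \<open>simp add: bomber_a_def\<close>)
  ultimately show ?thesis
    using K(3) by (simp add: mult_left_le)
qed

lemma bomber_K_ge_if_bomber_H_ge:
  assumes "0 < v" "v \<le> 1" "is_bomber_P v P" "is_bomber_K v P K" "0 \<le> x" "0 \<le> t"
    and "bomber_H v P x t \<ge> 1 - exp s"
  shows "K x t \<ge> ln v - s"
proof -
  have "v * exp (- K x t) \<le> exp s"
    using bomber_H_le_bomber_a_K[OF assms(2-6)] assms(7) by (simp add: bomber_a_def)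
  then have "ln v - K x t \<le> s"
    using assms(1) by (simp add: ln_mult flip: ln_le_cancel_iff)
  then show ?thesis by simp
qed

lemma const_smallo_if_ratio_tendsto:
  fixes f g :: "'a \<Rightarrow> real"
  assumes f: "filterlim f at_infinity F"
    and ratio: "((\<lambda>t. f t / g t) \<longlongrightarrow> \<rho>) F"
    and g: "eventually (\<lambda>t. g t \<noteq> 0) F"
  shows "(\<lambda>_. c) \<in> o[F](g)"
proof (rule smalloI_tendsto[OF _ g])
  have "((\<lambda>t. c / f t * (f t / g t)) \<longlongrightarrow> 0) F"
    using tendsto_mult[OF tendsto_divide_0[OF tendsto_const f] ratio] by simp
  moreover have "eventually (\<lambda>t. c / f t * (f t / g t) = c / g t) F"
    using filterlim_at_infinity_imp_eventually_ne[OF f, of 0] by eventually_elim simp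
  ultimately show "((\<lambda>t. c / g t) \<longlongrightarrow> 0) F"
    by (rule Lim_transform_eventually)
qed

theorem lemma3:
  fixes v \<rho> \<gamma> :: real and P K :: "real \<Rightarrow> real \<Rightarrow> real" and x :: "real \<Rightarrow> real"
  assumes v: "0 < v" "v \<le> 1"
    and P: "is_bomber_P v P"
    and K: "is_bomber_K v P K"
    and xpos: "eventually (\<lambda>t. x t > 0) (at_right 0)"
    and \<rho>: "0 < \<rho>" "((\<lambda>t. \<bar>ln t\<bar> / x t) \<longlongrightarrow> \<rho>) (at_right 0)"
    and \<gamma>: "0 < \<gamma>" "\<gamma> \<le> 1"
    and H: "\<exists>r. r \<in> o[at_right 0](x) \<and>
              eventually (\<lambda>t. bomber_H v P (x t) t \<ge> 1 - exp (- \<gamma> * x t + r t)) (at_right 0)"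
  shows "\<exists>r. r \<in> o[at_right 0](x) \<and>
           eventually (\<lambda>t. K (x t) t \<ge> \<gamma> * x t + r t) (at_right 0)"
proof -
  obtain r where r: "r \<in> o[at_right 0](x)"
    and Hr: "eventually (\<lambda>t. bomber_H v P (x t) t \<ge> 1 - exp (- \<gamma> * x t + r t)) (at_right 0)"
    using H by blast
  have "filterlim (\<lambda>t. \<bar>ln t\<bar>) at_infinity (at_right (0::real))"
    by (rule filterlim_at_top_imp_at_infinity) real_asymp
  then have "(\<lambda>_. ln v) \<in> o[at_right 0](x)"
    using \<rho>(2) xpos by (intro const_smallo_if_ratio_tendsto) (auto elim: eventually_mono)
  from this r have "(\<lambda>t. ln v - r t) \<in> o[at_right 0](x)"
    by (rule sum_in_smallo(2))
  moreover have "eventually (\<lambda>t. K (x t) t \<ge> \<gamma> * x t + (ln v - r t)) (at_right 0)"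
    using Hr xpos eventually_at_right_less[of 0]
  proof eventually_elim
    case (elim t)
    then show ?case
      using bomber_K_ge_if_bomber_H_ge[OF v P K, of "x t" t "- \<gamma> * x t + r t"] by simp
  qed
  ultimately show ?thesis by blast
qed

end
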